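(* Let $\Gamma$ be a distance-regular graph with diameter $D\ge3$ and valency $k$, which is neither bipartite nor almost bipartite. Let $\theta,\theta'$ be real numbers other than $k$ such that the pair $\theta,\theta'$ is tight. Then $\theta\neq\theta'$.
   Context: $\Gamma$ is a finite connected undirected graph without loops or multiple edges, distance-regular with diameter $D$, intersection numbers $a_i,b_i,c_i$ ($c_0=0$, $b_D=0$), valency $k$, $c_i+a_i+b_i=k$. Bipartite: $a_i=0$ for $0\le i\le D$; almost bipartite: $a_D\ne0$ and $a_i=0$ for $0\le i\le D-1$. For $\theta\in\mathbb{R}$ the pseudo cosine sequence for $\theta$ is the sequence of reals $\sigma_0,\dots,\sigma_D$ with $\sigma_0=1$ and $c_i\sigma_{i-1}+a_i\sigma_i+b_i\sigma_{i+1}=\theta\sigma_i$ for $0\le i\le D-1$. Reals $\theta,\theta'$ form a tight pair if, with $\sigma_i$, $\rho_i$ their pseudo cosine sequences, $(\sigma_i\rho_i)_{i=0}^D$ is a pseudo cosine sequence. *)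

theory Defs
  imports Complex_Main
begin

definition simple_graph :: "'v set \<Rightarrow> ('v \<Rightarrow> 'v \<Rightarrow> bool) \<Rightarrow> bool" where
  "simple_graph V E \<longleftrightarrow> finite V \<and> V \<noteq> {} \<and>
     (\<forall>x y. E x y \<longrightarrow> x \<in> V \<and> y \<in> V) \<and>
     (\<forall>x y. E x y \<longrightarrow> E y x) \<and> (\<forall>x. \<not> E x x)"

definition walk_len :: "('v \<Rightarrow> 'v \<Rightarrow> bool) \<Rightarrow> nat \<Rightarrow> 'v \<Rightarrow> 'v \<Rightarrow> bool" where
  "walk_len E n x y \<longleftrightarrow>
     (\<exists>f :: nat \<Rightarrow> 'v. f 0 = x \<and> f n = y \<and> (\<forall>i<n. E (f i) (f (Suc i))))"

definition graph_connected :: "'v set \<Rightarrow> ('v \<Rightarrow> 'v \<Rightarrow> bool) \<Rightarrow> bool" where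
  "graph_connected V E \<longleftrightarrow> (\<forall>x\<in>V. \<forall>y\<in>V. \<exists>n. walk_len E n x y)"

definition gdist :: "('v \<Rightarrow> 'v \<Rightarrow> bool) \<Rightarrow> 'v \<Rightarrow> 'v \<Rightarrow> nat" where
  "gdist E x y = (LEAST n. walk_len E n x y)"

definition diameter :: "'v set \<Rightarrow> ('v \<Rightarrow> 'v \<Rightarrow> bool) \<Rightarrow> nat" where
  "diameter V E = Max {gdist E x y | x y. x \<in> V \<and> y \<in> V}"

definition distance_regular ::
  "'v set \<Rightarrow> ('v \<Rightarrow> 'v \<Rightarrow> bool) \<Rightarrow> nat \<Rightarrow> nat \<Rightarrow>
   (nat \<Rightarrow> nat) \<Rightarrow> (nat \<Rightarrow> nat) \<Rightarrow> (nat \<Rightarrow> nat) \<Rightarrow> bool" where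
  "distance_regular V E D k a b c \<longleftrightarrow>
     simple_graph V E \<and> graph_connected V E \<and> D = diameter V E \<and>
     (\<forall>x\<in>V. card {z. E x z} = k) \<and>
     c 0 = 0 \<and> b D = 0 \<and>
     (\<forall>x\<in>V. \<forall>y\<in>V.
        (gdist E x y \<ge> 1 \<longrightarrow> card {z. E y z \<and> gdist E x z = gdist E x y - 1} = c (gdist E x y)) \<and>
        card {z. E y z \<and> gdist E x z = gdist E x y} = a (gdist E x y) \<and>
        card {z. E y z \<and> gdist E x z = gdist E x y + 1} = b (gdist E x y))"

definition bipartite_drg :: "nat \<Rightarrow> (nat \<Rightarrow> nat) \<Rightarrow> bool" where
  "bipartite_drg D a \<longleftrightarrow> (\<forall>i\<le>D. a i = 0)"

definition almost_bipartite_drg :: "nat \<Rightarrow> (nat \<Rightarrow> nat) \<Rightarrow> bool" where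
  "almost_bipartite_drg D a \<longleftrightarrow> a D \<noteq> 0 \<and> (\<forall>i<D. a i = 0)"

text \<open>Pseudo cosine sequence sigma_0..sigma_D for theta (values beyond D are irrelevant;
  for i = 0 the term c 0 * sigma (0-1) vanishes since c 0 = 0).\<close>
definition pseudo_cosine_seq ::
  "nat \<Rightarrow> (nat \<Rightarrow> nat) \<Rightarrow> (nat \<Rightarrow> nat) \<Rightarrow> (nat \<Rightarrow> nat) \<Rightarrow> real \<Rightarrow> (nat \<Rightarrow> real) \<Rightarrow> bool" where
  "pseudo_cosine_seq D a b c \<theta> \<sigma> \<longleftrightarrow> \<sigma> 0 = 1 \<and>
     (\<forall>i. i \<le> D - 1 \<longrightarrow>
        real (c i) * (if i = 0 then 0 else \<sigma> (i - 1)) + real (a i) * \<sigma> i + real (b i) * \<sigma> (Suc i) = \<theta> * \<sigma> i)"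

definition tight_pair ::
  "nat \<Rightarrow> (nat \<Rightarrow> nat) \<Rightarrow> (nat \<Rightarrow> nat) \<Rightarrow> (nat \<Rightarrow> nat) \<Rightarrow> real \<Rightarrow> real \<Rightarrow> bool" where
  "tight_pair D a b c \<theta> \<theta>' \<longleftrightarrow>
     (\<exists>\<sigma> \<rho>. pseudo_cosine_seq D a b c \<theta> \<sigma> \<and> pseudo_cosine_seq D a b c \<theta>' \<rho> \<and>
        (\<exists>\<eta>. pseudo_cosine_seq D a b c \<eta> (\<lambda>i. \<sigma> i * \<rho> i)))"

end

theory Submission
  imports Defs
begin

(* If theta = theta', the positivity of b_i (i < D) makes the pseudo cosine sequence sigma of theta
   unique, so sigma and its square sigma^2 are both pseudo cosine sequences, for theta = k sigma_1
   and some eta = k sigma_1^2. Eliminating sigma_2 from the two recurrences at i = 1 gives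
   (sigma_1 - 1)^2 (k (1 + a_1) sigma_1^2 + 2 k sigma_1 + k - a_1) = 0.
   If a_1 > 0 the quadratic factor is positive, so theta = k.
   If a_1 = 0 it forces sigma_1 = -1, i.e. theta = -k, eta = k, and then sigma_i = (-1)^i up to the
   first index m < D with a_m > 0, which exists because the graph is neither bipartite nor almost
   bipartite. Eliminating sigma_(m+1) from the two recurrences at m yields (b_m + 2 a_m)^2 = b_m^2,
   contradicting a_m > 0. *)

lemma walk_len_0_iff [simp]: "walk_len E 0 x y \<longleftrightarrow> x = y"
  unfolding walk_len_def by auto

lemma walk_len_1_iff: "walk_len E 1 x y \<longleftrightarrow> E x y"
proof
  assume "E x y"
  then show "walk_len E 1 x y"
    unfolding walk_len_def by (rule_tac x="\<lambda>i. if i = 0 then x else y" in exI) auto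
qed (auto simp: walk_len_def)

lemma walk_len_append:
  assumes "walk_len E m x z" "walk_len E n z y"
  shows "walk_len E (m + n) x y"
proof -
  obtain f where f: "f 0 = x" "f m = z" "\<forall>i<m. E (f i) (f (Suc i))"
    using assms(1) unfolding walk_len_def by blast
  obtain g where g: "g 0 = z" "g n = y" "\<forall>i<n. E (g i) (g (Suc i))"
    using assms(2) unfolding walk_len_def by blast
  define h where "h i = (if i \<le> m then f i else g (i - m))" for i
  have h_ge: "h i = g (i - m)" if "i \<ge> m" for i
    using that f(2) g(1) by (cases "i = m") (auto simp: h_def)
  have "E (h i) (h (Suc i))" if "i < m + n" for i
  proof (cases "i < m")
    case True
    then show ?thesis using f(3) by (simp add: h_def)
  next
    case False
    then show ?thesis
      using that g(3) h_ge[of i] h_ge[of "Suc i"] by (simp add: Suc_diff_le)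
  qed
  moreover have "h 0 = x" "h (m + n) = y"
    using f(1) g(2) h_ge[of "m + n"] by (auto simp: h_def)
  ultimately show ?thesis
    unfolding walk_len_def by blast
qed

lemma gdist_le: "walk_len E n x y \<Longrightarrow> gdist E x y \<le> n"
  unfolding gdist_def by (rule Least_le)

lemma gdist_self [simp]: "gdist E x x = 0"
  using gdist_le[of E 0 x x] by simp

lemma walk_len_gdist:
  "graph_connected V E \<Longrightarrow> x \<in> V \<Longrightarrow> y \<in> V \<Longrightarrow> walk_len E (gdist E x y) x y"
  unfolding graph_connected_def gdist_def by (metis (mono_tags) LeastI_ex)

lemma gdist_eq_0_iff:
  "graph_connected V E \<Longrightarrow> x \<in> V \<Longrightarrow> y \<in> V \<Longrightarrow> gdist E x y = 0 \<longleftrightarrow> y = x"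
  using walk_len_gdist[of V E x y] by auto

lemma gdist_neighbour_le:
  "graph_connected V E \<Longrightarrow> x \<in> V \<Longrightarrow> y \<in> V \<Longrightarrow> E y z \<Longrightarrow>
    gdist E x z \<le> gdist E x y + 1"
  using walk_len_append[OF walk_len_gdist walk_len_1_iff[THEN iffD2], of V E x y z]
  by (simp add: gdist_le)

lemma geodesic_exists:
  assumes "simple_graph V E" "graph_connected V E" "x \<in> V" "y \<in> V"
  obtains f where "f 0 = x" "f (gdist E x y) = y"
    "\<And>i. i < gdist E x y \<Longrightarrow> E (f i) (f (Suc i))"
    "\<And>j. j \<le> gdist E x y \<Longrightarrow> f j \<in> V \<and> gdist E x (f j) = j"
proof -
  let ?d = "gdist E x y"
  obtain f where f: "f 0 = x" "f ?d = y" "\<forall>i<?d. E (f i) (f (Suc i))"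
    using walk_len_gdist[OF assms(2-4)] unfolding walk_len_def by blast
  have in_V: "f j \<in> V" if "j \<le> ?d" for j
  proof (cases j)
    case (Suc i)
    then have "E (f i) (f j)"
      using that f(3) by simp
    then show ?thesis
      using assms(1) unfolding simple_graph_def by blast
  qed (use f(1) assms(3) in simp)
  have dist_f: "gdist E x (f j) = j" if j: "j \<le> ?d" for j
  proof -
    have "walk_len E j x (f j)"
      unfolding walk_len_def using f j by auto
    then have le: "gdist E x (f j) \<le> j"
      by (rule gdist_le)
    have "walk_len E (?d - j) (f j) y"
      unfolding walk_len_def using f j by (rule_tac x="\<lambda>i. f (i + j)" in exI) auto
    with walk_len_gdist[OF assms(2,3) in_V[OF j]]
    have "walk_len E (gdist E x (f j) + (?d - j)) x y"
      by (rule walk_len_append)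
    then have "?d \<le> gdist E x (f j) + (?d - j)"
      by (rule gdist_le)
    then show ?thesis
      using le j by linarith
  qed
  show ?thesis
    by (rule that[of f]) (use f in_V dist_f in blast)+
qed

locale distance_regular_graph =
  fixes V :: "'v set" and E :: "'v \<Rightarrow> 'v \<Rightarrow> bool" and D k :: nat and a b c :: "nat \<Rightarrow> nat"
  assumes distance_regular: "distance_regular V E D k a b c"
begin

lemma simple: "simple_graph V E"
  and connected: "graph_connected V E"
  and diameter_eq: "D = diameter V E"
  and valency: "x \<in> V \<Longrightarrow> card {z. E x z} = k"
  and c_0: "c 0 = 0"
  using distance_regular unfolding distance_regular_def by blast+

lemma card_c: "x \<in> V \<Longrightarrow> y \<in> V \<Longrightarrow> gdist E x y = i \<Longrightarrow> 1 \<le> i \<Longrightarrow>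
    card {z. E y z \<and> gdist E x z = i - 1} = c i"
  and card_a: "x \<in> V \<Longrightarrow> y \<in> V \<Longrightarrow> gdist E x y = i \<Longrightarrow>
    card {z. E y z \<and> gdist E x z = i} = a i"
  and card_b: "x \<in> V \<Longrightarrow> y \<in> V \<Longrightarrow> gdist E x y = i \<Longrightarrow>
    card {z. E y z \<and> gdist E x z = i + 1} = b i"
  using distance_regular unfolding distance_regular_def by blast+

lemma adjacent_in_V: "E y z \<Longrightarrow> y \<in> V \<and> z \<in> V"
  and adjacent_sym: "E y z \<Longrightarrow> E z y"
  and not_adjacent_self: "\<not> E z z"
  using simple unfolding simple_graph_def by blast+

lemma finite_neighbours: "finite {z. E y z \<and> P z}"
  using simple adjacent_in_V unfolding simple_graph_def
  by (metis (mono_tags) finite_subset mem_Collect_eq subsetI)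

lemma gdist_neighbour_ge: "x \<in> V \<Longrightarrow> E y z \<Longrightarrow> gdist E x y \<le> gdist E x z + 1"
  using gdist_neighbour_le[OF connected] adjacent_in_V adjacent_sym by blast

lemma diameter_attained: "\<exists>x\<in>V. \<exists>y\<in>V. gdist E x y = D"
proof -
  let ?S = "{gdist E x y | x y. x \<in> V \<and> y \<in> V}"
  have S: "?S = (\<lambda>(x, y). gdist E x y) ` (V \<times> V)"
    by auto
  have "finite ?S" "?S \<noteq> {}"
    unfolding S using simple unfolding simple_graph_def by auto
  then have "Max ?S \<in> ?S"
    by (rule Max_in)
  then obtain x y where "x \<in> V" "y \<in> V" "gdist E x y = Max ?S"
    by auto
  then show ?thesis
    unfolding diameter_eq diameter_def by blast
qed

lemma diametral_geodesic:
  obtains x f where "x \<in> V" "\<And>i. i < D \<Longrightarrow> E (f i) (f (Suc i))"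
    "\<And>j. j \<le> D \<Longrightarrow> f j \<in> V \<and> gdist E x (f j) = j"
proof -
  obtain x y where xy: "x \<in> V" "y \<in> V" "gdist E x y = D"
    using diameter_attained by blast
  show ?thesis
    by (rule geodesic_exists[OF simple connected xy(1,2)]) (use that xy in metis)
qed

lemma vertex_at_distance:
  assumes "i \<le> D"
  obtains x y where "x \<in> V" "y \<in> V" "gdist E x y = i"
proof (rule diametral_geodesic)
  fix x f
  assume "x \<in> V" "\<And>j. j \<le> D \<Longrightarrow> f j \<in> V \<and> gdist E x (f j) = j"
  then show thesis
    using that assms by blast
qed

lemma a_0: "a 0 = 0"
proof -
  obtain x where x: "x \<in> V"
    using vertex_at_distance by blast
  have "{z. E x z \<and> gdist E x z = 0} = {}"
    using gdist_eq_0_iff[OF connected x] adjacent_in_V not_adjacent_self by blast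
  then show ?thesis
    using card_a[OF x x gdist_self] by (metis card.empty)
qed

lemma b_0: "b 0 = k"
proof -
  obtain x where x: "x \<in> V"
    using vertex_at_distance by blast
  have "gdist E x z = 1" if "E x z" for z
  proof -
    have "gdist E x z \<le> 1"
      using that walk_len_1_iff gdist_le by metis
    moreover have "gdist E x z \<noteq> 0"
      using that gdist_eq_0_iff[OF connected x] adjacent_in_V not_adjacent_self by metis
    ultimately show ?thesis
      by linarith
  qed
  then have "{z. E x z \<and> gdist E x z = 0 + 1} = {z. E x z}"
    by auto
  then show ?thesis
    using card_b[OF x x gdist_self] valency[OF x] by simp
qed

lemma c_1:
  assumes "1 \<le> D"
  shows "c 1 = 1"
proof -
  obtain x y where xy: "x \<in> V" "y \<in> V" "gdist E x y = 1"
    using vertex_at_distance assms by blast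
  have "walk_len E 1 x y"
    using walk_len_gdist[OF connected xy(1,2)] xy(3) by simp
  then have "E x y"
    by (simp only: walk_len_1_iff)
  have "z = x" if "E y z" "gdist E x z = 0" for z
    using that gdist_eq_0_iff[OF connected xy(1)] adjacent_in_V by blast
  with \<open>E x y\<close> have "{z. E y z \<and> gdist E x z = 1 - 1} = {x}"
    using adjacent_sym by auto
  then show ?thesis
    using card_c[OF xy] by simp
qed

lemma b_pos:
  assumes "j < D"
  shows "0 < b j"
proof -
  obtain x f where x: "x \<in> V" and f: "\<And>i. i < D \<Longrightarrow> E (f i) (f (Suc i))"
    "\<And>j. j \<le> D \<Longrightarrow> f j \<in> V \<and> gdist E x (f j) = j"
    using diametral_geodesic by auto
  have fj: "f j \<in> V" "gdist E x (f j) = j"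
    using f(2) assms by auto
  have "f (Suc j) \<in> {z. E (f j) z \<and> gdist E x z = j + 1}"
    using f(1)[OF assms] f(2)[of "Suc j"] assms by simp
  then have "{z. E (f j) z \<and> gdist E x z = j + 1} \<noteq> {}"
    by blast
  then have "card {z. E (f j) z \<and> gdist E x z = j + 1} \<noteq> 0"
    using finite_neighbours by simp
  then show ?thesis
    using card_b[OF x fj] by simp
qed

lemma intersection_numbers_sum:
  assumes "i \<le> D"
  shows "c i + a i + b i = k"
proof (cases "i = 0")
  case True
  then show ?thesis
    using c_0 a_0 b_0 by simp
next
  case False
  obtain x y where xy: "x \<in> V" "y \<in> V" "gdist E x y = i"
    using vertex_at_distance assms by blast
  let ?N = "\<lambda>j. {z. E y z \<and> gdist E x z = j}"
  have "{z. E y z} = (?N (i - 1) \<union> ?N i) \<union> ?N (i + 1)"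
    using gdist_neighbour_le[OF connected xy(1,2)] gdist_neighbour_ge[OF xy(1)] xy(3) by fastforce
  then have "k = card ((?N (i - 1) \<union> ?N i) \<union> ?N (i + 1))"
    using valency[OF xy(2)] by metis
  also have "\<dots> = card (?N (i - 1) \<union> ?N i) + card (?N (i + 1))"
    by (rule card_Un_disjoint) (auto intro: finite_neighbours)
  also have "card (?N (i - 1) \<union> ?N i) = card (?N (i - 1)) + card (?N i)"
    by (rule card_Un_disjoint) (use False in \<open>auto intro: finite_neighbours\<close>)
  finally show ?thesis
    using card_c card_a card_b xy False by simp
qed

end

lemma pseudo_cosine_seq_rec:
  assumes "pseudo_cosine_seq D a b c \<theta> \<sigma>" "i < D"
  shows "real (c i) * (if i = 0 then 0 else \<sigma> (i - 1)) + real (a i) * \<sigma> i + real (b i) * \<sigma> (Suc i)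
    = \<theta> * \<sigma> i"
  using assms unfolding pseudo_cosine_seq_def by auto

lemma pseudo_cosine_seq_cong:
  assumes "pseudo_cosine_seq D a b c \<theta> \<sigma>" "0 < D" "\<And>i. i \<le> D \<Longrightarrow> \<tau> i = \<sigma> i"
  shows "pseudo_cosine_seq D a b c \<theta> \<tau>"
  using assms unfolding pseudo_cosine_seq_def by auto

lemma pseudo_cosine_seq_unique:
  assumes \<sigma>: "pseudo_cosine_seq D a b c \<theta> \<sigma>" and \<rho>: "pseudo_cosine_seq D a b c \<theta> \<rho>"
    and b_pos: "\<And>j. j < D \<Longrightarrow> 0 < b j"
  shows "i \<le> D \<Longrightarrow> \<sigma> i = \<rho> i"
proof (induction i rule: less_induct)
  case (less i)
  show ?case
  proof (cases i)
    case 0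
    then show ?thesis
      using \<sigma> \<rho> by (simp add: pseudo_cosine_seq_def)
  next
    case (Suc j)
    with less have "j < D" "\<sigma> j = \<rho> j" "j \<noteq> 0 \<Longrightarrow> \<sigma> (j - 1) = \<rho> (j - 1)"
      by auto
    then have "(if j = 0 then 0 else \<sigma> (j - 1)) = (if j = 0 then 0 else \<rho> (j - 1))"
      by simp
    then have "real (b j) * \<sigma> (Suc j) = real (b j) * \<rho> (Suc j)"
      using pseudo_cosine_seq_rec[OF \<sigma> \<open>j < D\<close>] pseudo_cosine_seq_rec[OF \<rho> \<open>j < D\<close>]
        \<open>\<sigma> j = \<rho> j\<close>
      by (simp only:)
    then show ?thesis
      using b_pos[OF \<open>j < D\<close>] Suc by simp
  qed
qed

lemma pseudo_cosine_seq_alternating: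
  assumes \<sigma>: "pseudo_cosine_seq D a b c (- real k) \<sigma>" and "m \<le> D"
    and a_zero: "\<And>j. j < m \<Longrightarrow> a j = 0" and b_pos: "\<And>j. j < D \<Longrightarrow> 0 < b j"
    and sum: "\<And>j. j < D \<Longrightarrow> c j + a j + b j = k" and c_0: "c 0 = 0"
  shows "j \<le> m \<Longrightarrow> \<sigma> j = (-1) ^ j"
proof (induction j rule: less_induct)
  case (less j)
  show ?case
  proof (cases j)
    case 0
    then show ?thesis
      using \<sigma> by (simp add: pseudo_cosine_seq_def)
  next
    case (Suc i)
    with less assms(2) a_zero have i: "i < D" "a i = 0" "\<sigma> i = (-1) ^ i"
      and prev: "i \<noteq> 0 \<Longrightarrow> \<sigma> (i - 1) = (-1) ^ (i - 1)"
      by auto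
    have "real (c i) * (if i = 0 then 0 else \<sigma> (i - 1)) = - real (c i) * (-1) ^ i"
      using prev c_0 by (cases i) auto
    moreover have "real k * (-1) ^ i = real (c i) * (-1) ^ i + real (b i) * (-1) ^ i"
      using sum[OF i(1)] i(2) by (metis add.right_neutral distrib_right of_nat_add)
    ultimately have "real (b i) * \<sigma> (Suc i) = real (b i) * (-1) ^ Suc i"
      using pseudo_cosine_seq_rec[OF \<sigma> i(1)] i by simp
    then show ?thesis
      using b_pos[OF i(1)] Suc by (simp del: power_Suc)
  qed
qed

lemma recurrence_square_elim:
  fixes c a b x y z \<theta> \<eta> :: real
  assumes "c * x + a * y + b * z = \<theta> * y" "c * x^2 + a * y^2 + b * z^2 = \<eta> * y^2"
  shows "(\<theta> * y - c * x - a * y)^2 = b * (\<eta> * y^2 - c * x^2 - a * y^2)"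
  using assms by algebra

lemma index_one_factorization:
  fixes k A t :: real
  assumes "(k * t * t - 1 - A * t)^2 = (k - 1 - A) * (k * t^2 * t^2 - 1 - A * t^2)"
  shows "(t - 1)^2 * (k * (1 + A) * t^2 + 2 * k * t + (k - A)) = 0"
  using assms by algebra

lemma index_one_quadratic_pos:
  fixes k A t :: real
  assumes "0 < A" "0 < k - 1 - A"
  shows "0 < k * (1 + A) * t^2 + 2 * k * t + (k - A)"
proof -
  have "0 < k * A * (k - 1 - A)" "0 < k * (1 + A)"
    using assms by simp_all
  have "k * (1 + A) * (k * (1 + A) * t^2 + 2 * k * t + (k - A))
      = (k * (1 + A) * t + k)^2 + k * A * (k - 1 - A)"
    by algebra
  also have "\<dots> > 0"
    using \<open>0 < k * A * (k - 1 - A)\<close> by (simp add: add_nonneg_pos)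
  finally show ?thesis
    using \<open>0 < k * (1 + A)\<close> by (simp add: zero_less_mult_iff)
qed

lemma neg_valency_recurrences_contradiction:
  fixes c a b k e s :: real
  assumes "c * (- e) + a * e + b * s = - k * e" "c * (- e)^2 + a * e^2 + b * s^2 = k * e^2"
    and "c + a + b = k" "e^2 = 1" "0 < a" "0 \<le> b"
  shows False
proof -
  have "(- k * e - c * (- e) - a * e)^2 = b * (k * e^2 - c * (- e)^2 - a * e^2)"
    using recurrence_square_elim[OF assms(1,2)] .
  then have "(b + 2 * a)^2 * e^2 = b * b * e^2"
    using assms(3) by algebra
  then have "(b + 2 * a)^2 = b^2"
    unfolding assms(4) by (simp add: power2_eq_square)
  moreover have "b^2 < (b + 2 * a)^2"
    using assms(5,6) by (simp add: power_strict_mono)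
  ultimately show False
    by simp
qed

lemma least_nonzero_a_below_diameter:
  assumes "\<not> bipartite_drg D a" "\<not> almost_bipartite_drg D a"
  obtains m where "m < D" "a m \<noteq> 0" "\<And>j. j < m \<Longrightarrow> a j = 0"
proof -
  have "\<exists>m<D. a m \<noteq> 0"
    using assms unfolding bipartite_drg_def almost_bipartite_drg_def
    by (metis le_neq_implies_less)
  then obtain m where "m < D \<and> a m \<noteq> 0" "\<And>j. j < m \<Longrightarrow> \<not> (j < D \<and> a j \<noteq> 0)"
    using exists_least_iff[of "\<lambda>m. m < D \<and> a m \<noteq> 0"] by blast
  with that show ?thesis
    by (meson less_trans)
qed

context distance_regular_graph
begin

lemma tight_pair_self_squares:
  assumes "tight_pair D a b c \<theta> \<theta>" "0 < D"
  shows "\<exists>\<sigma> \<eta>. pseudo_cosine_seq D a b c \<theta> \<sigma> \<and>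
    pseudo_cosine_seq D a b c \<eta> (\<lambda>i. \<sigma> i ^ 2)"
proof -
  obtain \<sigma> \<rho> \<eta> where \<sigma>: "pseudo_cosine_seq D a b c \<theta> \<sigma>"
    and \<rho>: "pseudo_cosine_seq D a b c \<theta> \<rho>"
    and prod: "pseudo_cosine_seq D a b c \<eta> (\<lambda>i. \<sigma> i * \<rho> i)"
    using assms(1) unfolding tight_pair_def by blast
  have "\<sigma> i ^ 2 = \<sigma> i * \<rho> i" if "i \<le> D" for i
    using pseudo_cosine_seq_unique[OF \<sigma> \<rho> b_pos that] by (simp add: power2_eq_square)
  then have "pseudo_cosine_seq D a b c \<eta> (\<lambda>i. \<sigma> i ^ 2)"
    by (rule pseudo_cosine_seq_cong[OF prod assms(2)])
  with \<sigma> show ?thesis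
    by blast
qed

lemma pseudo_cosine_seq_theta:
  assumes "pseudo_cosine_seq D a b c \<theta> \<sigma>" "0 < D"
  shows "\<theta> = real k * \<sigma> 1"
  using pseudo_cosine_seq_rec[OF assms] assms(1) a_0 b_0
  by (simp add: pseudo_cosine_seq_def)

lemma square_pseudo_cosine_index_one:
  fixes \<sigma> :: "nat \<Rightarrow> real"
  assumes \<sigma>: "pseudo_cosine_seq D a b c \<theta> \<sigma>"
    and sq: "pseudo_cosine_seq D a b c \<eta> (\<lambda>i. \<sigma> i ^ 2)"
    and "2 \<le> D"
  shows "(\<sigma> 1 - 1)^2 *
    (real k * (1 + real (a 1)) * (\<sigma> 1)^2 + 2 * real k * \<sigma> 1 + (real k - a 1)) = 0"
proof -
  have D: "0 < D" "1 < D"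
    using \<open>2 \<le> D\<close> by auto
  have \<theta>: "\<theta> = real k * \<sigma> 1" and \<eta>: "\<eta> = real k * (\<sigma> 1)^2"
    using pseudo_cosine_seq_theta[OF \<sigma> D(1)] pseudo_cosine_seq_theta[OF sq D(1)] by simp_all
  have B: "real (b 1) = real k - 1 - real (a 1)"
    using intersection_numbers_sum[of 1] c_1 D by simp
  have "1 * 1 + real (a 1) * \<sigma> 1 + real (b 1) * \<sigma> 2 = \<theta> * \<sigma> 1"
    "1 * 1^2 + real (a 1) * (\<sigma> 1)^2 + real (b 1) * (\<sigma> 2)^2 = \<eta> * (\<sigma> 1)^2"
    using pseudo_cosine_seq_rec[OF \<sigma> D(2)] pseudo_cosine_seq_rec[OF sq D(2)] c_1 D \<sigma>
    by (simp_all add: pseudo_cosine_seq_def numeral_2_eq_2)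
  from recurrence_square_elim[OF this]
  have "(k * \<sigma> 1 * \<sigma> 1 - 1 - a 1 * \<sigma> 1)^2
      = (real k - 1 - a 1) * (k * (\<sigma> 1)^2 * (\<sigma> 1)^2 - 1 - a 1 * (\<sigma> 1)^2)"
    unfolding \<theta> \<eta> B by simp
  then show ?thesis
    by (rule index_one_factorization)
qed

lemma square_pseudo_cosine_a1_pos:
  fixes \<sigma> :: "nat \<Rightarrow> real"
  assumes \<sigma>: "pseudo_cosine_seq D a b c \<theta> \<sigma>"
    and sq: "pseudo_cosine_seq D a b c \<eta> (\<lambda>i. \<sigma> i ^ 2)"
    and "2 \<le> D" "0 < a 1"
  shows "\<theta> = real k"
proof -
  have "0 < real k - 1 - a 1"
    using b_pos[of 1] intersection_numbers_sum[of 1] c_1 \<open>2 \<le> D\<close> by simp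
  then have "0 < real k * (1 + real (a 1)) * (\<sigma> 1)^2 + 2 * real k * \<sigma> 1 + (real k - a 1)"
    using index_one_quadratic_pos \<open>0 < a 1\<close> by simp
  then have "\<sigma> 1 = 1"
    using square_pseudo_cosine_index_one[OF \<sigma> sq \<open>2 \<le> D\<close>] by simp
  then show ?thesis
    using pseudo_cosine_seq_theta[OF \<sigma>] \<open>2 \<le> D\<close> by simp
qed

lemma square_pseudo_cosine_a1_zero:
  fixes \<sigma> :: "nat \<Rightarrow> real"
  assumes \<sigma>: "pseudo_cosine_seq D a b c \<theta> \<sigma>"
    and sq: "pseudo_cosine_seq D a b c \<eta> (\<lambda>i. \<sigma> i ^ 2)"
    and "2 \<le> D" "a 1 = 0" "\<theta> \<noteq> real k"
  shows "\<theta> = - real k" "\<eta> = real k"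
proof -
  have \<theta>: "\<theta> = real k * \<sigma> 1" and \<eta>: "\<eta> = real k * (\<sigma> 1)^2"
    using pseudo_cosine_seq_theta[OF \<sigma>] pseudo_cosine_seq_theta[OF sq] \<open>2 \<le> D\<close> by simp_all
  have "(\<sigma> 1 - 1)^2 * (real k * (\<sigma> 1)^2 + 2 * real k * \<sigma> 1 + real k) = 0"
    using square_pseudo_cosine_index_one[OF \<sigma> sq \<open>2 \<le> D\<close>] \<open>a 1 = 0\<close> by simp
  then have "real k * ((\<sigma> 1 - 1) * (\<sigma> 1 + 1))^2 = 0"
    by algebra
  moreover have "0 < k" "\<sigma> 1 \<noteq> 1"
    using b_pos[of 0] b_0 \<open>2 \<le> D\<close> \<open>\<theta> \<noteq> real k\<close> \<theta> by auto
  ultimately have "\<sigma> 1 = -1"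
    by simp
  then show "\<theta> = - real k" "\<eta> = real k"
    using \<theta> \<eta> by simp_all
qed

lemma square_pseudo_cosine_neg_valency_impossible:
  fixes \<sigma> :: "nat \<Rightarrow> real"
  assumes \<sigma>: "pseudo_cosine_seq D a b c (- real k) \<sigma>"
    and sq: "pseudo_cosine_seq D a b c (real k) (\<lambda>i. \<sigma> i ^ 2)"
    and m: "m < D" "a m \<noteq> 0" "\<And>j. j < m \<Longrightarrow> a j = 0"
  shows False
proof -
  have "m \<noteq> 0"
    using a_0 m(2) by (intro notI) simp
  have alt: "j \<le> m \<Longrightarrow> \<sigma> j = (-1) ^ j" for j
    by (rule pseudo_cosine_seq_alternating[OF \<sigma>])
      (use m b_pos intersection_numbers_sum c_0 in auto)
  define e where "e = \<sigma> m"
  have "e = - ((-1) ^ (m - 1))"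
    using alt[of m] \<open>m \<noteq> 0\<close> unfolding e_def by (cases m) simp_all
  then have prev: "\<sigma> (m - 1) = - e" and "e^2 = 1"
    using alt[of "m - 1"] by (simp_all flip: power_mult)
  have "real (c m) * (- e) + real (a m) * e + real (b m) * \<sigma> (Suc m) = - real k * e"
    using pseudo_cosine_seq_rec[OF \<sigma> m(1)] prev \<open>m \<noteq> 0\<close> by (simp add: e_def)
  moreover have "real (c m) * (- e)^2 + real (a m) * e^2 + real (b m) * (\<sigma> (Suc m))^2 = real k * e^2"
    using pseudo_cosine_seq_rec[OF sq m(1)] prev \<open>m \<noteq> 0\<close> by (simp add: e_def)
  moreover have "real (c m) + real (a m) + real (b m) = real k"
    using intersection_numbers_sum[of m] m(1) by simp
  ultimately show False
    by (rule neg_valency_recurrences_contradiction) (use \<open>e^2 = 1\<close> m(2) in simp_all)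
qed

end

theorem lemma6p1:
  fixes V :: "'v set" and E :: "'v \<Rightarrow> 'v \<Rightarrow> bool"
    and D k :: nat and a b c :: "nat \<Rightarrow> nat" and \<theta> \<theta>' :: real
  assumes "distance_regular V E D k a b c"
    and "D \<ge> 3"
    and "\<not> bipartite_drg D a"
    and "\<not> almost_bipartite_drg D a"
    and "\<theta> \<noteq> real k" and "\<theta>' \<noteq> real k"
    and "tight_pair D a b c \<theta> \<theta>'"
  shows "\<theta> \<noteq> \<theta>'"
proof
  assume "\<theta> = \<theta>'"
  interpret distance_regular_graph V E D k a b c
    by (rule distance_regular_graph.intro[OF assms(1)])
  have "2 \<le> D"
    using assms(2) by simp
  obtain \<sigma> \<eta> where \<sigma>: "pseudo_cosine_seq D a b c \<theta> \<sigma>"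
    and sq: "pseudo_cosine_seq D a b c \<eta> (\<lambda>i. \<sigma> i ^ 2)"
    using tight_pair_self_squares assms(7) \<open>\<theta> = \<theta>'\<close> \<open>2 \<le> D\<close> by fastforce
  obtain m where m: "m < D" "a m \<noteq> 0" "\<And>j. j < m \<Longrightarrow> a j = 0"
    using least_nonzero_a_below_diameter[OF assms(3,4)] by blast
  show False
  proof (cases "a 1 = 0")
    case True
    then have "\<theta> = - real k" "\<eta> = real k"
      using square_pseudo_cosine_a1_zero[OF \<sigma> sq \<open>2 \<le> D\<close> _ assms(5)] by simp_all
    then show False
      using square_pseudo_cosine_neg_valency_impossible[OF _ _ m] \<sigma> sq by simp
  next
    case False
    then show False
      using square_pseudo_cosine_a1_pos[OF \<sigma> sq \<open>2 \<le> D\<close>] assms(5) by simp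
  qed
qed

end
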